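(* Let $p$ be an odd prime, $q=p^e$ with $e\ge 1$, and let $k$ be an integer with $1\le k\le e$. Then $F_{2p^k}(1,x)$ is a permutation polynomial of $\mathbb{F}_q$ if and only if $\gcd\!\left(\frac{p^k-1}{2},\,q-1\right)=1$.
   Context: For an integer $n\ge 1$, the $n$-th reversed Dickson polynomial of the third kind is $F_n(a,x)=\sum_{i=0}^{\lfloor n/2\rfloor}\frac{n-2i}{n-i}\binom{n-i}{i}(-x)^i a^{n-2i}$, where each coefficient $\frac{n-2i}{n-i}\binom{n-i}{i}$ is an integer (read in $\mathbb{F}_q$), and $F_0(a,x)=0$. A polynomial $f\in\mathbb{F}_q[x]$ is a permutation polynomial of $\mathbb{F}_q$ if $c\mapsto f(c)$ is a bijection of $\mathbb{F}_q$. *)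

theory Defs
  imports "HOL-Computational_Algebra.Computational_Algebra"
begin

text \<open>Integer coefficient (n-2i)/(n-i) * binom(n-i,i) of the reversed Dickson
  polynomial of the third kind (exact division for 1 <= n, i <= n div 2).\<close>
definition rd3_coeff :: "nat \<Rightarrow> nat \<Rightarrow> nat" where
  "rd3_coeff n i = ((n - 2*i) * ((n - i) choose i)) div (n - i)"

text \<open>n-th reversed Dickson polynomial of the third kind F_n(a,x), evaluated at x;
  F_0 = 0.\<close>
definition rev_dickson3 :: "nat \<Rightarrow> 'a::comm_ring_1 \<Rightarrow> 'a \<Rightarrow> 'a" where
  "rev_dickson3 n a x =
     (if n = 0 then 0
      else (\<Sum>i = 0..n div 2. of_nat (rd3_coeff n i) * (- x) ^ i * a ^ (n - 2*i)))"

definition is_perm_poly :: "('a \<Rightarrow> 'a) \<Rightarrow> bool" where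
  "is_perm_poly f \<longleftrightarrow> bij f"

end

theory Submission
  imports Defs "HOL-Number_Theory.Residues"
begin

text \<open>
  For \<open>n \<ge> 1\<close> we have \<open>F_n(1,x) = E_{n-1}(x)\<close> with \<open>E_m(x) = \<Sum>_i C(m-i,i) (-x)^i\<close>, and
  \<open>E_{m+2} = E_{m+1} - x E_m\<close> gives \<open>(a - b) E_m(ab) = a^{m+1} - b^{m+1}\<close> whenever \<open>a + b = 1\<close>.
  For \<open>N = p^k\<close> in characteristic \<open>p\<close> the Frobenius map turns
  \<open>a^{2N} - b^{2N} = (a^N - b^N)(a^N + b^N)\<close> into \<open>(a - b)^N\<close>, so
  \<open>E_{2N-1}(ab) = (a - b)^{N-1} = (1 - 4ab)^{(N-1)/2}\<close>. Taking \<open>a = X\<close>, \<open>b = 1 - X\<close> in the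
  polynomial ring and cancelling the non-constant inner polynomial \<open>X(1 - X)\<close> of a
  composition gives \<open>F_{2N}(1,x) = (1 - 4x)^{(N-1)/2}\<close> for every \<open>x\<close>. Up to an affine change
  of variable this is \<open>x^d\<close>, which permutes \<open>\<bbbF>_q\<close> exactly when \<open>gcd(d, q - 1) = 1\<close>.
\<close>

definition rev_dickson2_one :: "nat \<Rightarrow> 'a::comm_ring_1 \<Rightarrow> 'a" where
  "rev_dickson2_one m x = (\<Sum>i\<le>m. of_nat ((m - i) choose i) * (- x) ^ i)"

lemma rd3_coeff_eq_choose:
  assumes "1 \<le> n" and "i \<le> n div 2"
  shows "rd3_coeff n i = (n - 1 - i) choose i"
proof -
  have "(n - 2 * i) * ((n - i) choose i) = (n - i) * ((n - 1 - i) choose i)"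
    using binomial_absorb_comp[of "n - i" i] by (simp add: diff_diff_left mult_2)
  moreover have "n - i > 0"
    using assms by linarith
  ultimately show ?thesis
    unfolding rd3_coeff_def by simp
qed

lemma rev_dickson3_one_eq_rev_dickson2_one:
  assumes "1 \<le> n"
  shows "rev_dickson3 n 1 x = rev_dickson2_one (n - 1) x"
proof -
  have "rev_dickson3 n 1 x = (\<Sum>i\<le>n div 2. of_nat ((n - 1 - i) choose i) * (- x) ^ i)"
    unfolding rev_dickson3_def using assms
    by (auto simp: rd3_coeff_eq_choose atMost_atLeast0 intro!: sum.cong)
  also have "\<dots> = (\<Sum>i\<le>n - 1. of_nat ((n - 1 - i) choose i) * (- x) ^ i)"
  proof (rule sum.mono_neutral_left)
    show "\<forall>i\<in>{..n - 1} - {..n div 2}. of_nat ((n - 1 - i) choose i) * (- x) ^ i = 0"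
    proof
      fix i
      assume "i \<in> {..n - 1} - {..n div 2}"
      then have "n - 1 - i < i"
        by auto
      then show "of_nat ((n - 1 - i) choose i) * (- x) ^ i = 0"
        by (simp add: binomial_eq_0)
    qed
  qed (use assms in auto)
  finally show ?thesis
    unfolding rev_dickson2_one_def .
qed

lemma rev_dickson2_one_0 [simp]: "rev_dickson2_one 0 x = 1"
  and rev_dickson2_one_Suc_0 [simp]: "rev_dickson2_one (Suc 0) x = 1"
  by (simp_all add: rev_dickson2_one_def)

lemma rev_dickson2_one_Suc_Suc:
  "rev_dickson2_one (Suc (Suc m)) x = rev_dickson2_one (Suc m) x - x * rev_dickson2_one m x"
proof -
  let ?t = "\<lambda>n j. of_nat ((n - j) choose Suc j) * (- x) ^ Suc j"
  have Pascal: "(Suc m - j) choose Suc j = ((m - j) choose j) + ((m - j) choose Suc j)" for j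
    by (cases "j \<le> m") (simp_all add: Suc_diff_le)
  have "rev_dickson2_one (Suc (Suc m)) x = 1 + (\<Sum>j\<le>Suc m. ?t (Suc m) j)"
    unfolding rev_dickson2_one_def by (subst sum.atMost_Suc_shift) simp
  also have "\<dots> = 1 + (\<Sum>j\<le>Suc m. ?t m j)
                   + (\<Sum>j\<le>Suc m. of_nat ((m - j) choose j) * (- x) ^ Suc j)"
    by (simp add: Pascal sum.distrib[symmetric] algebra_simps)
  also have "(\<Sum>j\<le>Suc m. of_nat ((m - j) choose j) * (- x) ^ Suc j) = - x * rev_dickson2_one m x"
    by (simp add: rev_dickson2_one_def sum_distrib_left mult_ac)
  also have "1 + (\<Sum>j\<le>Suc m. ?t m j) = rev_dickson2_one (Suc m) x"
    unfolding rev_dickson2_one_def by (subst sum.atMost_Suc_shift) simp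
  finally show ?thesis
    by (simp add: algebra_simps)
qed

lemma rev_dickson2_one_closed_form:
  fixes a b :: "'a::comm_ring_1"
  assumes "a + b = 1"
  shows "(a - b) * rev_dickson2_one m (a * b) = a ^ Suc m - b ^ Suc m"
proof (induction m rule: induct_nat_012)
  case 0
  show ?case by simp
next
  case 1
  have "a ^ Suc 1 - b ^ Suc 1 = (a - b) * (a + b)"
    by (simp add: algebra_simps)
  then show ?case
    using assms by simp
next
  case (ge2 m)
  have "(a - b) * rev_dickson2_one (Suc (Suc m)) (a * b)
      = (a - b) * rev_dickson2_one (Suc m) (a * b) - a * b * ((a - b) * rev_dickson2_one m (a * b))"
    by (simp add: rev_dickson2_one_Suc_Suc algebra_simps)
  also have "\<dots> = (a + b) * (a ^ Suc (Suc m) - b ^ Suc (Suc m)) - a * b * (a ^ Suc m - b ^ Suc m)"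
    using ge2 assms by simp
  finally show ?case
    by (simp add: algebra_simps)
qed

lemma rev_dickson2_one_char_power_mult:
  fixes a b :: "'a::idom"
  assumes "prime CHAR('a)" and N: "N = CHAR('a) ^ k" and "odd N"
    and "a + b = 1" and "a \<noteq> b"
  shows "rev_dickson2_one (2 * N - 1) (a * b) = (1 - 4 * a * b) ^ ((N - 1) div 2)"
proof -
  define d where "d = (N - 1) div 2"
  have Nd: "N = Suc (2 * d)"
    using \<open>odd N\<close> unfolding d_def by (cases N) auto
  have "(a - b) * rev_dickson2_one (2 * N - 1) (a * b) = a ^ (2 * N) - b ^ (2 * N)"
    using rev_dickson2_one_closed_form[OF \<open>a + b = 1\<close>, of "2 * N - 1"] Nd by simp
  also have "\<dots> = (a ^ N + (- b) ^ N) * (a ^ N + b ^ N)"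
    using \<open>odd N\<close> by (simp add: power_mult algebra_simps power2_eq_square flip: power_mult_distrib mult_2)
  also have "a ^ N + b ^ N = 1"
    using freshmans_dream'[OF assms(1) N, of a b] \<open>a + b = 1\<close> by simp
  also have "a ^ N + (- b) ^ N = (a - b) * ((a - b) ^ 2) ^ d"
    using freshmans_dream'[OF assms(1) N, of a "- b"] by (simp add: Nd power_mult)
  also have "(a - b) ^ 2 = (a + b) ^ 2 - 4 * a * b"
    by (simp add: power2_eq_square algebra_simps)
  finally have "(a - b) * (rev_dickson2_one (2 * N - 1) (a * b) - (1 - 4 * a * b) ^ d) = 0"
    using \<open>a + b = 1\<close> by (simp add: algebra_simps)
  then show ?thesis
    using \<open>a \<noteq> b\<close> unfolding d_def by simp
qed

lemma pcompose_power: "pcompose (p ^ n) q = pcompose p q ^ n"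
  by (induction n) (simp_all add: pcompose_1 pcompose_mult)

lemma pcompose_rev_dickson2_one:
  "pcompose (rev_dickson2_one m p) q = rev_dickson2_one m (pcompose p q)"
  unfolding rev_dickson2_one_def
  by (simp add: pcompose_sum pcompose_smult pcompose_power pcompose_uminus of_nat_poly)

lemma poly_rev_dickson2_one: "poly (rev_dickson2_one m p) c = rev_dickson2_one m (poly p c)"
  unfolding rev_dickson2_one_def by (simp add: poly_sum of_nat_poly)

lemma two_neq_zero_if_CHAR_neq_2:
  assumes "CHAR('a::comm_ring_1) \<noteq> 2"
  shows "(2::'a) \<noteq> 0"
proof
  assume "(2::'a) = 0"
  then have "CHAR('a) dvd 2"
    using of_nat_eq_0_iff_char_dvd[where 'a = 'a, of 2] by simp
  then have "CHAR('a) \<noteq> 0" and "CHAR('a) \<le> 2"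
    by (auto dest: dvd_imp_le intro: Nat.gr0I)
  then show False
    using assms CHAR_not_1[where 'a = 'a] by linarith
qed

lemma rev_dickson2_one_char_power:
  fixes c :: "'a::field"
  assumes "prime CHAR('a)" and "CHAR('a) \<noteq> 2" and N: "N = CHAR('a) ^ k"
  shows "rev_dickson2_one (2 * N - 1) c = (1 - 4 * c) ^ ((N - 1) div 2)"
proof -
  define X :: "'a poly" where "X = [:0, 1:]"
  define G where "G = rev_dickson2_one (2 * N - 1) X - (1 - 4 * X) ^ ((N - 1) div 2)"
  have "odd CHAR('a)"
    using assms(1,2) prime_odd_nat prime_ge_2_nat[OF assms(1)] by fastforce
  then have "odd N"
    using N by simp
  have "X \<noteq> 1 - X"
  proof
    assume "X = 1 - X"
    then have "(2::'a) = 0"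
      using arg_cong[of X "1 - X" "\<lambda>p. Polynomial.coeff p 1"] by (simp add: X_def coeff_diff)
    then show False
      using two_neq_zero_if_CHAR_neq_2[OF assms(2)] by simp
  qed
  then have "pcompose G (X * (1 - X)) = 0"
    using rev_dickson2_one_char_power_mult[of N k X "1 - X"] assms(1) N \<open>odd N\<close>
    by (simp add: G_def X_def pcompose_diff pcompose_rev_dickson2_one pcompose_power pcompose_pCons
        pcompose_1 pcompose_mult numeral_poly mult.assoc)
  moreover have "degree (X * (1 - X)) > 0"
    using le_degree[of "X * (1 - X)" 2]
    by (simp add: X_def numeral_2_eq_2 coeff_pCons)
  ultimately have "G = 0"
    by (rule pcompose_eq_0)
  then have "poly G c = 0"
    by simp
  then show ?thesis
    unfolding G_def by (simp add: poly_rev_dickson2_one X_def mult.commute)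
qed

lemma rev_dickson3_one_char_power:
  assumes "prime CHAR('a::field)" and "CHAR('a) \<noteq> 2" and "N = CHAR('a) ^ k"
  shows "rev_dickson3 (2 * N) 1 = (\<lambda>c::'a. (1 - 4 * c) ^ ((N - 1) div 2))"
proof
  fix c :: 'a
  have "N > 0"
    using assms(1,3) prime_gt_0_nat by simp
  then show "rev_dickson3 (2 * N) 1 c = (1 - 4 * c) ^ ((N - 1) div 2)"
    using rev_dickson3_one_eq_rev_dickson2_one[of "2 * N" c] rev_dickson2_one_char_power[OF assms]
    by simp
qed

lemma power_card_minus_one_eq_1:
  fixes x :: "'a::{finite,field}"
  assumes "x \<noteq> 0"
  shows "x ^ (card (UNIV :: 'a set) - 1) = 1"
proof -
  have "(\<Prod>y\<in>UNIV - {0}. x * y) = (\<Prod>y\<in>UNIV - {0}. y)"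
    by (rule prod.reindex_bij_witness[of _ "\<lambda>y. y / x" "\<lambda>y. x * y"]) (use assms in auto)
  moreover have "(\<Prod>y\<in>UNIV - {0}. x * y) = x ^ (card (UNIV :: 'a set) - 1) * (\<Prod>y\<in>UNIV - {0}. y)"
    by (simp add: prod.distrib card_Diff_singleton)
  moreover have "(\<Prod>y\<in>UNIV - {0}. y) \<noteq> (0::'a)"
    by simp
  ultimately show ?thesis
    by simp
qed

lemma card_minus_one_le_if_power_eq_1:
  fixes m :: nat
  assumes "m > 0" and "\<And>y::'a::{finite,field}. y \<noteq> 0 \<Longrightarrow> y ^ m = 1"
  shows "card (UNIV :: 'a set) - 1 \<le> m"
proof -
  define P :: "'a poly" where "P = Polynomial.monom 1 m - 1"
  have "Polynomial.coeff P m = 1"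
    using \<open>m > 0\<close> by (simp add: P_def)
  then have "P \<noteq> 0"
    by auto
  have "card (UNIV :: 'a set) - 1 = card ((UNIV :: 'a set) - {0})"
    by (simp add: card_Diff_singleton)
  also have "\<dots> \<le> card {y. poly P y = 0}"
    by (rule card_mono[OF poly_roots_finite[OF \<open>P \<noteq> 0\<close>]]) (auto simp: P_def poly_monom assms(2))
  also have "\<dots> \<le> degree P"
    by (rule card_poly_roots_bound[OF \<open>P \<noteq> 0\<close>])
  also have "\<dots> \<le> m"
    unfolding P_def by (rule order.trans[OF degree_diff_le_max]) (simp add: degree_monom_eq)
  finally show ?thesis .
qed

lemma bij_power_iff_coprime:
  assumes "d > 0"
  shows "bij (\<lambda>x::'a::{finite,field}. x ^ d) \<longleftrightarrow> coprime d (card (UNIV :: 'a set) - 1)"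
proof
  assume "coprime d (card (UNIV :: 'a set) - 1)"
  then obtain u v where uv: "d * u = (card (UNIV :: 'a set) - 1) * v + 1"
    using bezout_nat[of d "card (UNIV :: 'a set) - 1"] assms by auto
  have "(x ^ d) ^ u = x" for x :: 'a
  proof (cases "x = 0")
    case False
    have "(x ^ d) ^ u = (x ^ (card (UNIV :: 'a set) - 1)) ^ v * x"
      by (simp add: uv mult.commute flip: power_mult)
    then show ?thesis
      using power_card_minus_one_eq_1[OF False] by simp
  next
    case True
    moreover have "d * u > 0"
      using uv by simp
    ultimately show ?thesis
      by (simp add: power_0_left flip: power_mult)
  qed
  then have "inj (\<lambda>x::'a. x ^ d)"
    by (rule inj_on_inverseI)
  then show "bij (\<lambda>x::'a. x ^ d)"
    by (simp add: bij_def finite_UNIV_inj_surj)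
next
  assume bij: "bij (\<lambda>x::'a. x ^ d)"
  define g where "g = gcd d (card (UNIV :: 'a set) - 1)"
  define m where "m = (card (UNIV :: 'a set) - 1) div g"
  have card_ge2: "card (UNIV :: 'a set) \<ge> 2"
    using card_mono[of UNIV "{0, 1 :: 'a}"] by simp
  have "g > 0" and g_dvd: "g dvd d" "g dvd card (UNIV :: 'a set) - 1"
    using card_ge2 by (simp_all add: g_def)
  then have card_eq: "card (UNIV :: 'a set) - 1 = g * m"
    by (simp add: m_def)
  have "m > 0"
  proof (rule gr0I)
    assume "m = 0"
    then have "card (UNIV :: 'a set) - 1 = 0"
      using card_eq by (simp only: mult_0_right)
    then show False
      using card_ge2 by linarith
  qed
  \<comment> \<open>\<open>x^d\<close> factors through \<open>x^g\<close>, so every unit is a \<open>g\<close>-th power and hence an \<open>m\<close>-th root of unity\<close>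
  have "inj (\<lambda>x::'a. x ^ g)"
  proof (rule injI)
    fix x y :: 'a
    assume "x ^ g = y ^ g"
    moreover have "d = g * (d div g)"
      using g_dvd(1) by simp
    ultimately have "x ^ d = y ^ d"
      by (metis power_mult)
    then show "x = y"
      using bij by (simp add: bij_def inj_def)
  qed
  then have "surj (\<lambda>x::'a. x ^ g)"
    by (simp add: finite_UNIV_inj_surj)
  have "y ^ m = 1" if "y \<noteq> 0" for y :: 'a
  proof -
    obtain x where x: "y = x ^ g"
      using \<open>surj (\<lambda>x::'a. x ^ g)\<close> by (metis surjD)
    then have "x \<noteq> 0"
      using \<open>y \<noteq> 0\<close> \<open>g > 0\<close> by auto
    have "y ^ m = x ^ (card (UNIV :: 'a set) - 1)"
      unfolding x card_eq by (simp only: power_mult)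
    then show ?thesis
      using power_card_minus_one_eq_1[OF \<open>x \<noteq> 0\<close>] by simp
  qed
  then have "card (UNIV :: 'a set) - 1 \<le> m"
    by (rule card_minus_one_le_if_power_eq_1[OF \<open>m > 0\<close>])
  then have "g * m \<le> 1 * m"
    unfolding card_eq by simp
  then have "g \<le> 1"
    using \<open>m > 0\<close> by (simp only: mult_le_cancel2)
  then have "g = 1"
    using \<open>g > 0\<close> by simp
  then show "coprime d (card (UNIV :: 'a set) - 1)"
    by (simp add: g_def coprime_iff_gcd_eq_1)
qed

lemma bij_comp_affine_iff:
  fixes f :: "'a::field \<Rightarrow> 'b"
  assumes "u \<noteq> 0"
  shows "bij (\<lambda>x. f (v - u * x)) \<longleftrightarrow> bij f"
proof -
  have "bij (\<lambda>x::'a. v - u * x)"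
    using assms by (intro bij_betw_byWitness[where f' = "\<lambda>y. (v - y) / u"]) auto
  then show ?thesis
    using bij_betw_comp_iff[of "\<lambda>x. v - u * x" UNIV UNIV f UNIV] by (simp add: comp_def)
qed

lemma CHAR_eq_of_card_eq_prime_power:
  assumes "prime p" and "card (UNIV :: 'a::{finite,field} set) = p ^ e"
  shows "CHAR('a) = p"
proof -
  have "prime CHAR('a)"
    by (simp add: finite_imp_CHAR_pos prime_CHAR_semidom)
  moreover have "CHAR('a) dvd p ^ e"
    using CHAR_dvd_CARD[where 'a = 'a] assms(2) by simp
  ultimately show ?thesis
    using assms(1) prime_dvd_power primes_dvd_imp_eq by blast
qed

theorem theorem2p7:
  fixes p e k :: nat
  assumes "prime p" and "odd p" and "e \<ge> 1"
    and "card (UNIV :: 'a::{finite,field} set) = p ^ e"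
    and "1 \<le> k" and "k \<le> e"
  shows "is_perm_poly (\<lambda>c::'a. rev_dickson3 (2 * p ^ k) 1 c)
     \<longleftrightarrow> gcd ((p ^ k - 1) div 2) (p ^ e - 1) = 1"
proof -
  define d where "d = (p ^ k - 1) div 2"
  have char: "CHAR('a) = p"
    using CHAR_eq_of_card_eq_prime_power assms(1,4) .
  have "p \<ge> 3"
    using assms(1,2) prime_ge_2_nat[of p] by (cases "p = 2") auto
  then have "p ^ k \<ge> 3"
    using power_increasing[of 1 k p] assms(5) by simp
  then have "d > 0"
    unfolding d_def by linarith
  have "(2::'a) \<noteq> 0"
    using two_neq_zero_if_CHAR_neq_2[where 'a = 'a] char \<open>p \<ge> 3\<close> by simp
  then have "(4::'a) \<noteq> 0"
    using mult_eq_0_iff[of "2::'a" 2] by simp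
  have closed_form: "rev_dickson3 (2 * p ^ k) 1 = (\<lambda>c::'a. (1 - 4 * c) ^ d)"
    using rev_dickson3_one_char_power[where 'a = 'a, of "p ^ k" k] assms(1) char \<open>p \<ge> 3\<close>
    by (simp add: d_def)
  have "is_perm_poly (\<lambda>c::'a. rev_dickson3 (2 * p ^ k) 1 c) \<longleftrightarrow> bij (\<lambda>y::'a. y ^ d)"
    unfolding is_perm_poly_def closed_form
    by (rule bij_comp_affine_iff) (use \<open>(4::'a) \<noteq> 0\<close> in simp)
  also have "\<dots> \<longleftrightarrow> gcd d (p ^ e - 1) = 1"
    using bij_power_iff_coprime[OF \<open>d > 0\<close>, where 'a = 'a]
    unfolding assms(4) coprime_iff_gcd_eq_1 .
  finally show ?thesis
    unfolding d_def .
qed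

end
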